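(* Let $\mathcal A$ be a unital $C^*$-algebra, $a\in\mathcal A$, and $p,q\in\mathcal A$ projections such that $a$ is invertible up to $(p,q)$, with $(p,q)$-inverse $b$. Let $r_1,r_2,s_1,s_2\in\mathcal A$ be projections with $1-p=r_1+r_2$ and $1-q=s_1+s_2$. If $a$ is invertible up to $(1-r_1,1-s_1)$ and either $\|s_2ar_1\|<\|b\|^{-1}$ or $\|s_1ar_2\|<\|b\|^{-1}$, then $a$ is invertible up to $(1-r_2,1-s_2)$.
   Context: For $a\in\mathcal A$ and projections $p,q$ in a unital $C^*$-algebra $\mathcal A$, $a$ is invertible up to $(p,q)$ if there is $b\in\mathcal A$ with $b=(1-p)b(1-q)$, $(1-q)a(1-p)b=1-q$ and $b(1-q)a(1-p)=1-p$; $b$ is called the $(p,q)$-inverse of $a$. *)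

theory Defs
  imports Complex_Main
begin

class unital_cstar_algebra = real_normed_algebra_1 + banach +
  fixes scaleC :: "complex \<Rightarrow> 'a \<Rightarrow> 'a"
    and adj :: "'a \<Rightarrow> 'a"
  assumes scaleC_add_right: "scaleC c (x + y) = scaleC c x + scaleC c y"
    and scaleC_add_left: "scaleC (c + d) x = scaleC c x + scaleC d x"
    and scaleC_scaleC: "scaleC c (scaleC d x) = scaleC (c * d) x"
    and scaleC_one: "scaleC 1 x = x"
    and scaleR_scaleC: "scaleR r x = scaleC (complex_of_real r) x"
    and norm_scaleC: "norm (scaleC c x) = cmod c * norm x"
    and mult_scaleC_left: "scaleC c x * y = scaleC c (x * y)"
    and mult_scaleC_right: "x * scaleC c y = scaleC c (x * y)"
    and adj_add: "adj (x + y) = adj x + adj y"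
    and adj_scaleC: "adj (scaleC c x) = scaleC (cnj c) (adj x)"
    and adj_mult: "adj (x * y) = adj y * adj x"
    and adj_adj: "adj (adj x) = x"
    and cstar_identity: "norm (adj x * x) = norm x * norm x"

definition is_projection :: "'a::unital_cstar_algebra \<Rightarrow> bool" where
  "is_projection p \<longleftrightarrow> p * p = p \<and> adj p = p"

definition pq_inverse :: "'a::unital_cstar_algebra \<Rightarrow> 'a \<Rightarrow> 'a \<Rightarrow> 'a \<Rightarrow> bool" where
  "pq_inverse a p q b \<longleftrightarrow>
     b = (1 - p) * b * (1 - q) \<and>
     (1 - q) * a * (1 - p) * b = 1 - q \<and>
     b * (1 - q) * a * (1 - p) = 1 - p"

definition invertible_upto :: "'a::unital_cstar_algebra \<Rightarrow> 'a \<Rightarrow> 'a \<Rightarrow> bool" where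
  "invertible_upto a p q \<longleftrightarrow> (\<exists>b. pq_inverse a p q b)"

end

theory Submission
  imports Defs
begin

text \<open>Write \<open>a\<close> as a \<open>2 \<times> 2\<close> block matrix with rows cut out by \<open>s\<^sub>1, s\<^sub>2\<close> and
  columns by \<open>r\<^sub>1, r\<^sub>2\<close>, and subtract the small off-diagonal block \<open>E\<close>
  (\<open>s\<^sub>2 a r\<^sub>1\<close> or \<open>s\<^sub>1 a r\<^sub>2\<close>).
  Since \<open>\<parallel>b E\<parallel> < 1\<close>, a Neumann series shows that \<open>a - E\<close> is still invertible up to
  \<open>(p, q)\<close>, with inverse \<open>(1 - b E)\<^sup>-\<^sup>1 b\<close>.  Now \<open>a - E\<close> is block triangular and its
  \<open>(1,1)\<close> block \<open>s\<^sub>1 a r\<^sub>1\<close> is invertible, so the off-diagonal block of its inverse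
  vanishes and the \<open>(2,2)\<close> block of the inverse inverts \<open>s\<^sub>2 (a - E) r\<^sub>2 = s\<^sub>2 a r\<^sub>2\<close>.
  Invertibility up to \<open>(1 - r\<^sub>2, 1 - s\<^sub>2)\<close> depends only on that block.\<close>

lemma neumann_series_inverse:
  fixes x :: "'a::{real_normed_algebra_1,banach}"
  assumes "norm x < 1"
  obtains w where "(1 - x) * w = 1" and "w * (1 - x) = 1"
proof
  have summable: "summable (\<lambda>n. x ^ n)"
    using assms by (rule complete_algebra_summable_geometric)
  have tail: "(\<Sum>n. x ^ Suc n) = (\<Sum>n. x ^ n) - 1"
    using suminf_split_head[OF summable] by simp
  show "(1 - x) * (\<Sum>n. x ^ n) = 1"
    using suminf_mult[OF summable, of x] tail by (simp add: algebra_simps)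
  show "(\<Sum>n. x ^ n) * (1 - x) = 1"
    using suminf_mult2[OF summable, of x] tail by (simp add: algebra_simps power_commutes)
qed

lemma commute_two_sided_inverse:
  fixes u w c :: "'a::monoid_mult"
  assumes "u * w = 1" and "w * u = 1" and "c * u = u * c"
  shows "c * w = w * c"
proof -
  have "c * w = w * u * c * w" using assms(2) by simp
  also have "\<dots> = w * c * u * w" using assms(3) by (simp add: mult.assoc)
  also have "\<dots> = w * c" using assms(1) by (simp add: mult.assoc)
  finally show ?thesis .
qed

lemma invertible_upto_small_perturbation:
  fixes a p q b E :: "'a::unital_cstar_algebra"
  assumes "p * p = p" and "q * q = q"
    and inv: "pq_inverse a p q b"
    and E: "(1 - q) * E * (1 - p) = E"
    and small: "norm E < inverse (norm b)"
  shows "invertible_upto (a - E) p q"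
proof -
  define P Q where "P = 1 - p" and "Q = 1 - q"
  have PP: "P * P = P" and QQ: "Q * Q = Q"
    using assms(1,2) by (simp_all add: P_def Q_def algebra_simps)
  have b: "b = P * b * Q" and QaPb: "Q * a * P * b = Q" and bQaP: "b * Q * a * P = P"
    using inv unfolding pq_inverse_def P_def Q_def by auto
  have Pb: "P * b = b" by (metis b PP mult.assoc)
  have bQ: "b * Q = b" by (metis b QQ mult.assoc)
  have QE: "Q * E = E" by (metis E QQ Q_def mult.assoc)
  have EP: "E * P = E" by (metis E PP P_def mult.assoc)
  have "norm b > 0"
    using small by (cases "b = 0") auto
  then have "norm (b * E) < norm b * inverse (norm b)"
    using small norm_mult_ineq[of b E] by (meson mult_strict_left_mono order.strict_trans1)
  then obtain w where uw: "(1 - b * E) * w = 1" and wu: "w * (1 - b * E) = 1"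
    using \<open>norm b > 0\<close> by (auto elim: neumann_series_inverse)
  have "P * (1 - b * E) = (1 - b * E) * P"
    by (simp add: algebra_simps EP) (simp add: Pb flip: mult.assoc)
  then have Pw: "P * w = w * P"
    using uw wu by (rule commute_two_sided_inverse[rotated 2])
  have corner: "Q * (a - E) * P = Q * a * P * (1 - b * E)"
    by (simp add: algebra_simps QaPb QE EP flip: mult.assoc)
  have "pq_inverse (a - E) p q (w * b)"
    unfolding pq_inverse_def P_def[symmetric] Q_def[symmetric]
  proof (intro conjI)
    show "w * b = P * (w * b) * Q"
      by (metis Pw Pb bQ mult.assoc)
    show "Q * (a - E) * P * (w * b) = Q"
      by (metis corner uw QaPb mult.assoc mult_1_left)
    show "w * b * Q * (a - E) * P = P"
      by (metis corner wu bQaP Pw mult.assoc mult_1_right)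
  qed
  then show ?thesis
    unfolding invertible_upto_def by blast
qed

lemma projection_sum_orthogonal:
  fixes r1 r2 :: "'a::unital_cstar_algebra"
  assumes "is_projection r1" and "is_projection r2"
    and "(r1 + r2) * (r1 + r2) = r1 + r2"
  shows "r1 * r2 = 0" and "r2 * r1 = 0"
proof -
  have r1: "r1 * r1 = r1" "adj r1 = r1" and r2: "r2 * r2 = r2" "adj r2 = r2"
    using assms(1,2) unfolding is_projection_def by auto
  have anti: "r1 * r2 + r2 * r1 = 0"
    using assms(3) r1 r2 by (simp add: algebra_simps)
  have "r1 * (r1 * r2 + r2 * r1) * r1 = 2 *\<^sub>R (r1 * r2 * r1)"
    using r1 by (simp add: algebra_simps scaleR_2) (metis mult.assoc)
  then have "r1 * r2 * r1 = 0"
    using anti by simp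
  moreover have "norm (r2 * r1) * norm (r2 * r1) = norm (r1 * r2 * r1)"
    using cstar_identity[of "r2 * r1"] r1 r2
    by (simp add: adj_mult mult.assoc) (metis r2(1) mult.assoc)
  ultimately show "r2 * r1 = 0"
    by simp
  with anti show "r1 * r2 = 0"
    by simp
qed

lemma idempotent_mult_left_absorb:
  fixes e x :: "'a::semigroup_mult"
  assumes "e * e = e"
  shows "e * (e * x) = e * x"
  by (metis assms mult.assoc)

lemma orthogonal_mult_left_zero:
  fixes e f x :: "'a::ring_1"
  assumes "e * f = 0"
  shows "e * (f * x) = 0"
  by (metis assms mult.assoc mult_zero_left)

lemma corner_inverse_upper_triangular:
  fixes a X c r1 r2 s1 s2 :: "'a::ring_1"
  assumes idem: "r1 * r1 = r1" "r2 * r2 = r2" "s1 * s1 = s1" "s2 * s2 = s2"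
    and orth: "r1 * r2 = 0" "r2 * r1 = 0" "s1 * s2 = 0" "s2 * s1 = 0"
    and right_inv: "(s1 + s2) * a * (r1 + r2) * X = s1 + s2"
    and left_inv: "X * (s1 + s2) * a * (r1 + r2) = r1 + r2"
    and triangular: "s2 * a * r1 = 0"
    and corner_right_inv: "s1 * a * r1 * c = s1"
  shows "s2 * a * r2 * X * s2 = s2" and "r2 * X * s2 * a * r2 = r2"
proof -
  have triangular': "s2 * (a * r1) = 0"
    using triangular by (simp add: mult.assoc)
  note rules = algebra_simps idem idem[THEN idempotent_mult_left_absorb]
    orth orth[THEN orthogonal_mult_left_zero] triangular' triangular'[THEN orthogonal_mult_left_zero]
  have "r2 * (X * (s1 + s2) * a * (r1 + r2)) * r1 = 0"
    using left_inv by (simp add: rules)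
  then have "r2 * X * s1 * a * r1 = 0"
    by (simp add: rules)
  then have "r2 * X * s1 = 0"
    by (metis corner_right_inv mult.assoc mult_zero_left)
  then have no_lower_left: "r2 * (X * (s1 * x)) = 0" for x
    by (metis mult.assoc mult_zero_left)
  have "s2 * ((s1 + s2) * a * (r1 + r2) * X) * s2 = s2"
    using right_inv by (simp add: rules)
  then show "s2 * a * r2 * X * s2 = s2"
    by (simp add: rules)
  have "r2 * (X * (s1 + s2) * a * (r1 + r2)) * r2 = r2"
    using left_inv by (simp add: rules)
  then show "r2 * X * s2 * a * r2 = r2"
    by (simp add: rules no_lower_left)
qed

lemma corner_inverse_lower_triangular:
  fixes a X c r1 r2 s1 s2 :: "'a::ring_1"
  assumes idem: "r1 * r1 = r1" "r2 * r2 = r2" "s1 * s1 = s1" "s2 * s2 = s2"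
    and orth: "r1 * r2 = 0" "r2 * r1 = 0" "s1 * s2 = 0" "s2 * s1 = 0"
    and right_inv: "(s1 + s2) * a * (r1 + r2) * X = s1 + s2"
    and left_inv: "X * (s1 + s2) * a * (r1 + r2) = r1 + r2"
    and triangular: "s1 * a * r2 = 0"
    and corner_left_inv: "c * s1 * a * r1 = r1"
  shows "s2 * a * r2 * X * s2 = s2" and "r2 * X * s2 * a * r2 = r2"
proof -
  have triangular': "s1 * (a * r2) = 0"
    using triangular by (simp add: mult.assoc)
  note rules = algebra_simps idem idem[THEN idempotent_mult_left_absorb]
    orth orth[THEN orthogonal_mult_left_zero] triangular' triangular'[THEN orthogonal_mult_left_zero]
  have "s1 * ((s1 + s2) * a * (r1 + r2) * X) * s2 = 0"
    using right_inv by (simp add: rules)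
  then have "s1 * a * r1 * X * s2 = 0"
    by (simp add: rules)
  then have "r1 * X * s2 = 0"
    by (metis corner_left_inv mult.assoc mult_zero_right)
  then have no_upper_right: "r1 * (X * s2) = 0"
    by (simp add: mult.assoc)
  have "s2 * ((s1 + s2) * a * (r1 + r2) * X) * s2 = s2"
    using right_inv by (simp add: rules)
  then show "s2 * a * r2 * X * s2 = s2"
    by (simp add: rules no_upper_right)
  have "r2 * (X * (s1 + s2) * a * (r1 + r2)) * r2 = r2"
    using left_inv by (simp add: rules)
  then show "r2 * X * s2 * a * r2 = r2"
    by (simp add: rules)
qed

lemma pq_inverse_corner_cong:
  fixes a a' p q b :: "'a::unital_cstar_algebra"
  assumes "(1 - q) * a * (1 - p) = (1 - q) * a' * (1 - p)"
  shows "pq_inverse a p q b \<longleftrightarrow> pq_inverse a' p q b"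
proof -
  have regroup: "c * (1 - q) * x * (1 - p) = c * ((1 - q) * x * (1 - p))" for c x :: 'a
    by (simp add: mult.assoc)
  show ?thesis
    unfolding pq_inverse_def regroup assms ..
qed

lemma invertible_upto_corner_cong:
  fixes a a' p q :: "'a::unital_cstar_algebra"
  assumes "(1 - q) * a * (1 - p) = (1 - q) * a' * (1 - p)"
  shows "invertible_upto a p q \<longleftrightarrow> invertible_upto a' p q"
  unfolding invertible_upto_def using pq_inverse_corner_cong[OF assms] by blast

lemma invertible_upto_complement_of_block_triangular:
  fixes a X c r1 r2 s1 s2 :: "'a::unital_cstar_algebra"
  assumes idem: "r1 * r1 = r1" "r2 * r2 = r2" "s1 * s1 = s1" "s2 * s2 = s2"
    and orth: "r1 * r2 = 0" "r2 * r1 = 0" "s1 * s2 = 0" "s2 * s1 = 0"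
    and "pq_inverse a p q X" and "1 - p = r1 + r2" and "1 - q = s1 + s2"
    and "pq_inverse a (1 - r1) (1 - s1) c"
    and triangular: "s2 * a * r1 = 0 \<or> s1 * a * r2 = 0"
  shows "invertible_upto a (1 - r2) (1 - s2)"
proof -
  have X: "(s1 + s2) * a * (r1 + r2) * X = s1 + s2" "X * (s1 + s2) * a * (r1 + r2) = r1 + r2"
    using assms(9-11) unfolding pq_inverse_def by auto
  have c: "s1 * a * r1 * c = s1" "c * s1 * a * r1 = r1"
    using assms(12) unfolding pq_inverse_def by auto
  have "s2 * a * r2 * X * s2 = s2 \<and> r2 * X * s2 * a * r2 = r2"
    using triangular corner_inverse_upper_triangular[OF idem orth X _ c(1)]
      corner_inverse_lower_triangular[OF idem orth X _ c(2)] by blast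
  then have "pq_inverse a (1 - r2) (1 - s2) (r2 * X * s2)"
    unfolding pq_inverse_def using idem by (simp add: mult.assoc) (metis mult.assoc)
  then show ?thesis
    unfolding invertible_upto_def by blast
qed

theorem mainTheorem10:
  fixes a p q b r1 r2 s1 s2 :: "'a::unital_cstar_algebra"
  assumes "is_projection p" and "is_projection q"
    and "pq_inverse a p q b"
    and "is_projection r1" and "is_projection r2"
    and "is_projection s1" and "is_projection s2"
    and "1 - p = r1 + r2" and "1 - q = s1 + s2"
    and "invertible_upto a (1 - r1) (1 - s1)"
    and "norm (s2 * a * r1) < inverse (norm b) \<or> norm (s1 * a * r2) < inverse (norm b)"
  shows "invertible_upto a (1 - r2) (1 - s2)"
proof -
  have pq: "p * p = p" "q * q = q"
    using assms(1,2) unfolding is_projection_def by auto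
  have idem: "r1 * r1 = r1" "r2 * r2 = r2" "s1 * s1 = s1" "s2 * s2 = s2"
    using assms(4-7) unfolding is_projection_def by auto
  have "(r1 + r2) * (r1 + r2) = r1 + r2" and "(s1 + s2) * (s1 + s2) = s1 + s2"
    using pq by (simp_all flip: assms(8,9) add: algebra_simps)
  then have orth: "r1 * r2 = 0" "r2 * r1 = 0" "s1 * s2 = 0" "s2 * s1 = 0"
    using projection_sum_orthogonal assms(4-7) by metis+
  note rules = algebra_simps idem idem[THEN idempotent_mult_left_absorb]
    orth orth[THEN orthogonal_mult_left_zero]
  obtain E where E: "E = s2 * a * r1 \<or> E = s1 * a * r2" and small: "norm E < inverse (norm b)"
    using assms(11) by blast
  have "(s1 + s2) * E * (r1 + r2) = E"
    using E by (auto simp: rules)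
  then obtain X where X: "pq_inverse (a - E) p q X"
    using invertible_upto_small_perturbation[OF pq assms(3) _ small] assms(8,9)
    unfolding invertible_upto_def by auto
  have corners: "s1 * (a - E) * r1 = s1 * a * r1" "s2 * (a - E) * r2 = s2 * a * r2"
    using E by (auto simp: rules)
  then have "invertible_upto (a - E) (1 - r1) (1 - s1)"
    using assms(10) invertible_upto_corner_cong[of "1 - s1" a "1 - r1" "a - E"] by simp
  then obtain c where c: "pq_inverse (a - E) (1 - r1) (1 - s1) c"
    unfolding invertible_upto_def by blast
  have "s2 * (a - E) * r1 = 0 \<or> s1 * (a - E) * r2 = 0"
    using E by (auto simp: rules)
  with X c have "invertible_upto (a - E) (1 - r2) (1 - s2)"
    using invertible_upto_complement_of_block_triangular[OF idem orth] assms(8,9) by blast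
  then show ?thesis
    using corners(2) invertible_upto_corner_cong[of "1 - s2" a "1 - r2" "a - E"] by simp
qed

end
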